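(* Let $N\in\mathbb{N}$, $J\in\{0,\dots,N\}$, $m,M\in(0,1)$ with $m\le M$, and $a_1,\dots,a_N\in[m,M]$. Define $f\colon[m,M]^N\to\mathbb{R}^+$ by \[ f(z_1,\dots,z_N)=\prod_{i=1}^{J}\Big(N+\frac{a_i}{z_i}\Big)\prod_{i=J+1}^{N}\Big(N+\frac{1-a_i}{1-z_i}\Big). \] Then $f$ is convex. Moreover, any function obtained from $f$ by recursively substituting variables $z_i$ by affine functions of the remaining free variables (on a convex domain mapped into $[m,M]^N$) is convex. *)

theory Defs
  imports "HOL-Analysis.Analysis"
begin

text \<open>Vectors in R^N are represented as functions nat => real, only the
components 1..N being relevant.  The function f of the lemma:\<close>

definition lem2_f :: "nat \<Rightarrow> nat \<Rightarrow> (nat \<Rightarrow> real) \<Rightarrow> (nat \<Rightarrow> real) \<Rightarrow> real" where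
  "lem2_f N J a z =
     (\<Prod>i=1..J. real N + a i / z i) * (\<Prod>i=J+1..N. real N + (1 - a i) / (1 - z i))"

definition lem2_box :: "nat \<Rightarrow> real \<Rightarrow> real \<Rightarrow> (nat \<Rightarrow> real) set" where
  "lem2_box N m M = {z. \<forall>i\<in>{1..N}. m \<le> z i \<and> z i \<le> M}"

end

theory Submission
  imports Defs
begin

text \<open>Each factor of \<open>lem2_f\<close> has the form \<open>N + b / w\<close> with \<open>b > 0\<close> and \<open>w > 0\<close>
  affine in the variables (\<open>w = z\<^sub>i\<close> or \<open>w = 1 - z\<^sub>i\<close>), and \<open>z \<mapsto> ln (N + b / z)\<close> is
  convex on \<open>(0, \<infinity>)\<close> because its derivative \<open>-b / (z (N z + b))\<close> increases. So every
  factor is log-convex, also after an affine substitution of the variables. Log-convexity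
  is preserved by products, and it implies convexity because \<open>exp\<close> is convex and
  increasing.\<close>

definition log_convex_on :: "'a::real_vector set \<Rightarrow> ('a \<Rightarrow> real) \<Rightarrow> bool" where
  "log_convex_on S f \<longleftrightarrow> (\<forall>x\<in>S. 0 < f x) \<and> convex_on S (\<lambda>x. ln (f x))"

lemma convex_on_cong:
  assumes "\<And>x. x \<in> S \<Longrightarrow> f x = g x"
  shows "convex_on S f \<longleftrightarrow> convex_on S g"
  using assms by (auto simp: convex_on_def convexD)

lemma convex_on_compose_affine:
  fixes D :: "'v::real_vector set"
  assumes "convex_on S \<phi>" "linear L" "convex D" "\<And>x. x \<in> D \<Longrightarrow> c + L x \<in> S"
  shows "convex_on D (\<lambda>x. \<phi> (c + L x))"
proof (rule convex_onI[OF _ \<open>convex D\<close>])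
  fix t :: real and x y assume t: "0 < t" "t < 1" and xy: "x \<in> D" "y \<in> D"
  have "c + L ((1 - t) *\<^sub>R x + t *\<^sub>R y) = (1 - t) *\<^sub>R (c + L x) + t *\<^sub>R (c + L y)"
    using \<open>linear L\<close> by (simp add: linear_add linear_scale)
  then show "\<phi> (c + L ((1 - t) *\<^sub>R x + t *\<^sub>R y)) \<le> (1 - t) * \<phi> (c + L x) + t * \<phi> (c + L y)"
    using convex_onD[OF assms(1), of t "c + L x" "c + L y"] t xy assms(4) by simp
qed

lemma convex_on_exp_compose:
  assumes "convex_on S h"
  shows "convex_on S (\<lambda>x. exp (h x))"
proof (rule convex_onI[OF _ convex_on_imp_convex[OF assms]])
  fix t :: real and x y assume t: "0 < t" "t < 1" and xy: "x \<in> S" "y \<in> S"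
  have "exp (h ((1 - t) *\<^sub>R x + t *\<^sub>R y)) \<le> exp ((1 - t) *\<^sub>R h x + t *\<^sub>R h y)"
    using convex_onD[OF assms, of t x y] t xy by simp
  also have "\<dots> \<le> (1 - t) * exp (h x) + t * exp (h y)"
    using convex_onD[OF exp_convex, of t "h x" "h y"] t by simp
  finally show "exp (h ((1 - t) *\<^sub>R x + t *\<^sub>R y)) \<le> (1 - t) * exp (h x) + t * exp (h y)" .
qed

lemma log_convex_on_imp_convex_on:
  assumes "log_convex_on S f"
  shows "convex_on S f"
proof -
  have "convex_on S (\<lambda>x. exp (ln (f x)))"
    using assms convex_on_exp_compose by (auto simp: log_convex_on_def)
  moreover have "convex_on S f \<longleftrightarrow> convex_on S (\<lambda>x. exp (ln (f x)))"
    using assms by (intro convex_on_cong) (simp add: log_convex_on_def)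
  ultimately show ?thesis
    by simp
qed

lemma log_convex_on_mult:
  assumes "log_convex_on S f" "log_convex_on S g"
  shows "log_convex_on S (\<lambda>x. f x * g x)"
proof -
  have "convex_on S (\<lambda>x. ln (f x) + ln (g x))"
    using assms by (auto simp: log_convex_on_def)
  moreover have "convex_on S (\<lambda>x. ln (f x * g x)) \<longleftrightarrow> convex_on S (\<lambda>x. ln (f x) + ln (g x))"
    using assms by (intro convex_on_cong) (simp add: log_convex_on_def ln_mult_pos)
  ultimately show ?thesis
    using assms by (simp add: log_convex_on_def)
qed

lemma log_convex_on_prod:
  assumes "finite I" "convex S" "\<And>i. i \<in> I \<Longrightarrow> log_convex_on S (f i)"
  shows "log_convex_on S (\<lambda>x. \<Prod>i\<in>I. f i x)"
  using assms(1,3)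
proof (induction I rule: finite_induct)
  case empty
  then show ?case
    using \<open>convex S\<close> by (simp add: log_convex_on_def convex_on_const)
next
  case (insert j I)
  then show ?case
    by (simp add: log_convex_on_mult)
qed

lemma log_convex_on_compose_affine:
  fixes D :: "'v::real_vector set"
  assumes "log_convex_on S \<phi>" "linear L" "convex D" "\<And>x. x \<in> D \<Longrightarrow> c + L x \<in> S"
  shows "log_convex_on D (\<lambda>x. \<phi> (c + L x))"
  using assms convex_on_compose_affine[of S "\<lambda>z. ln (\<phi> z)" L D c]
  by (simp add: log_convex_on_def)

lemma log_convex_on_const_plus_divide:
  fixes K b :: real
  assumes "0 \<le> K" "0 < b"
  shows "log_convex_on {0<..} (\<lambda>z. K + b / z)"
proof -
  have pos: "0 < K * z + b" if "0 < z" for z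
    using assms that by (simp add: add_nonneg_pos)
  have "convex_on {0<..} (\<lambda>z. ln (K + b / z))"
  proof (rule convex_on_realI[where f' = "\<lambda>z. - b / (z * (K * z + b))"])
    fix z :: real assume "z \<in> {0<..}"
    with pos[of z] show "((\<lambda>z. ln (K + b / z)) has_real_derivative - b / (z * (K * z + b))) (at z)"
      by (auto intro!: derivative_eq_intros simp: field_simps power2_eq_square)
  next
    fix x y :: real assume "x \<in> {0<..}" "y \<in> {0<..}" "x \<le> y"
    then have "b / (y * (K * y + b)) \<le> b / (x * (K * x + b))"
      using assms pos[of x] by (intro frac_le mult_mono) (auto intro: mult_left_mono)
    then show "- b / (x * (K * x + b)) \<le> - b / (y * (K * y + b))"
      by simp
  qed simp
  moreover have "0 < K + b / z" if "0 < z" for z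
    using assms that by (simp add: add_nonneg_pos)
  ultimately show ?thesis
    by (simp add: log_convex_on_def)
qed

lemma log_convex_on_lem2_f_affine:
  fixes D :: "'v::real_vector set" and c :: "nat \<Rightarrow> real" and L :: "nat \<Rightarrow> 'v \<Rightarrow> real"
  assumes "J \<le> N" "0 < m" "M < 1" "\<forall>i\<in>{1..N}. m \<le> a i \<and> a i \<le> M"
    and "convex D" "\<forall>i\<in>{1..N}. linear (L i)"
    and "\<forall>x\<in>D. (\<lambda>i. c i + L i x) \<in> lem2_box N m M"
  shows "log_convex_on D (\<lambda>x. lem2_f N J a (\<lambda>i. c i + L i x))"
proof -
  have z: "m \<le> c i + L i x" "c i + L i x \<le> M" if "x \<in> D" "i \<in> {1..N}" for x i
    using assms(7) that by (auto simp: lem2_box_def)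
  have left: "log_convex_on D (\<lambda>x. real N + a i / (c i + L i x))" if "i \<in> {1..J}" for i
  proof (rule log_convex_on_compose_affine[OF log_convex_on_const_plus_divide _ \<open>convex D\<close>])
    have "i \<in> {1..N}"
      using that assms(1) by simp
    then show "0 < a i" "linear (L i)"
      using assms(2,4,6) by fastforce+
    show "c i + L i x \<in> {0<..}" if "x \<in> D" for x
      using \<open>i \<in> {1..J}\<close> assms(1,2) z[OF that] by fastforce
  qed simp
  have right: "log_convex_on D (\<lambda>x. real N + (1 - a i) / (1 - (c i + L i x)))"
    if "i \<in> {J+1..N}" for i
  proof -
    have "log_convex_on D (\<lambda>x. real N + (1 - a i) / ((1 - c i) + - L i x))"
    proof (rule log_convex_on_compose_affine[OF log_convex_on_const_plus_divide _ \<open>convex D\<close>])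
      have "i \<in> {1..N}"
        using that by simp
      then show "0 < 1 - a i" "linear (\<lambda>x. - L i x)"
        using assms(3,4,6) by (fastforce intro: linear_compose_neg)+
      show "1 - c i + - L i x \<in> {0<..}" if "x \<in> D" for x
        using \<open>i \<in> {J+1..N}\<close> assms(3) z[OF that] by fastforce
    qed simp
    then show ?thesis
      by (simp add: algebra_simps)
  qed
  show ?thesis
    unfolding lem2_f_def
    using left right \<open>convex D\<close> by (intro log_convex_on_mult log_convex_on_prod) auto
qed

theorem lemma2:
  fixes N J :: nat and m M :: real and a :: "nat \<Rightarrow> real"
  assumes "J \<le> N"
    and "0 < m" and "m < 1" and "0 < M" and "M < 1" and "m \<le> M"
    and "\<forall>i\<in>{1..N}. m \<le> a i \<and> a i \<le> M"
  shows "(\<forall>x\<in>lem2_box N m M. \<forall>y\<in>lem2_box N m M. \<forall>t::real. 0 \<le> t \<and> t \<le> 1 \<longrightarrow>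
            lem2_f N J a (\<lambda>i. (1 - t) * x i + t * y i)
              \<le> (1 - t) * lem2_f N J a x + t * lem2_f N J a y)
       \<and> (\<forall>(D :: 'v::real_vector set) (c :: nat \<Rightarrow> real) (L :: nat \<Rightarrow> 'v \<Rightarrow> real).
            convex D \<longrightarrow> (\<forall>i\<in>{1..N}. linear (L i)) \<longrightarrow>
            (\<forall>x\<in>D. (\<lambda>i. c i + L i x) \<in> lem2_box N m M) \<longrightarrow>
            convex_on D (\<lambda>x. lem2_f N J a (\<lambda>i. c i + L i x)))"
proof (intro conjI allI ballI impI)
  fix D :: "'v::real_vector set" and c :: "nat \<Rightarrow> real" and L :: "nat \<Rightarrow> 'v \<Rightarrow> real"
  assume "convex D" "\<forall>i\<in>{1..N}. linear (L i)" "\<forall>x\<in>D. (\<lambda>i. c i + L i x) \<in> lem2_box N m M"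
  with assms show "convex_on D (\<lambda>x. lem2_f N J a (\<lambda>i. c i + L i x))"
    by (intro log_convex_on_imp_convex_on log_convex_on_lem2_f_affine) auto
next
  fix x y :: "nat \<Rightarrow> real" and t :: real
  assume x: "x \<in> lem2_box N m M" and y: "y \<in> lem2_box N m M" and t: "0 \<le> t \<and> t \<le> 1"
  have "(\<lambda>i. x i + s * (y i - x i)) \<in> lem2_box N m M" if "s \<in> {0..1}" for s
  proof -
    have "x i + s * (y i - x i) = (1 - s) *\<^sub>R x i + s *\<^sub>R y i" for i
      by (simp add: algebra_simps)
    then show ?thesis
      using x y that convexD[OF convex_real_interval(5)] by (auto simp: lem2_box_def)
  qed
  then have "convex_on {0..1} (\<lambda>s. lem2_f N J a (\<lambda>i. x i + s * (y i - x i)))"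
    using assms by (intro log_convex_on_imp_convex_on log_convex_on_lem2_f_affine)
      (auto intro: bounded_linear.linear bounded_linear_mult_left)
  from convex_onD[OF this, of t 0 1] t show "lem2_f N J a (\<lambda>i. (1 - t) * x i + t * y i)
      \<le> (1 - t) * lem2_f N J a x + t * lem2_f N J a y"
    by (simp add: algebra_simps)
qed

end
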